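(* Let $n\in\mathbb{N}$ and let $\ell:[0,1]\to\mathbb{R}$ be convex and $L$-Lipschitz. There exists an online learning strategy that, when presented sequentially (possibly adversarially and adaptively) with channel test operators $E_{A,B}^{(t)}$, $t\in\{1,\dots,T\}$, and associated losses $\ell_t(\cdot)=\ell((\cdot)-b_t)$ with $b_t\in[0,1]$, outputs hypotheses $N_{A,B}^{(t)}\in\mathsf{PAULI}_n'$ such that for every $n$-qubit Pauli channel $\mathcal{P}$, \[ \sum_{t=1}^T \ell_t\big(\mathrm{Tr}[E_{A,B}^{(t)}N_{A,B}^{(t)}]\big) - \sum_{t=1}^T \ell_t\big(\mathrm{Tr}[E_{A,B}^{(t)}C_{A,B}^{\mathcal{P}}]\big) = \mathcal{O}(L\sqrt{nT}). \]
   Context: $A,B$ are $n$-qubit systems, $d=2^n$. Choi matrix: $C^{\mathcal{N}}_{A,B}=\sum_{i,j=0}^{d-1}|i\rangle\langle j|\otimes\mathcal{N}(|i\rangle\langle j|)$. A channel test operator is $E_{A,B}\geq0$ with $E_{A,B}\leq\sigma_A\otimes\mathbb{1}_B$ for some density operator $\sigma_A$. For $\vec z,\vec x\in\{0,1\}^n$ the Pauli operator is $P^{\vec z,\vec x}=\mathrm{i}^{\vec z\cdot\vec x}Z^{\vec z}X^{\vec x}$ (tensor products of single-qubit $Z^{z_i}$, $X^{x_i}$). An $n$-qubit Pauli channel is $\mathcal{P}(\rho)=\sum_{\vec z,\vec x}p_{\vec z,\vec x}P^{\vec z,\vec x}\rho P^{\vec z,\vec x\dagger}$ for a probability vector $(p_{\vec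 z,\vec x})$ on $\{0,1\}^n\times\{0,1\}^n$. $\mathsf{PAULI}_n'$ is the set of Choi matrices of $n$-qubit Pauli channels. In round $t$ the adversary presents $E^{(t)}$, the learner outputs $N^{(t)}$ (depending only on past information) and predicts $\mathrm{Tr}[E^{(t)}N^{(t)}]$, then $b_t$ is revealed. *)

theory Defs
  imports "HOL-Analysis.Convex" "Jordan_Normal_Form.Matrix"
begin

type_synonym cmat = "complex mat"

definition mtrace :: "cmat \<Rightarrow> complex" where
  "mtrace A = (\<Sum>i<dim_row A. A $$ (i, i))"

definition adj :: "cmat \<Rightarrow> cmat" where
  "adj A = mat (dim_col A) (dim_row A) (\<lambda>(i, j). cnj (A $$ (j, i)))"

definition psd :: "nat \<Rightarrow> cmat \<Rightarrow> bool" where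
  "psd k A \<longleftrightarrow> A \<in> carrier_mat k k \<and>
     (\<forall>v \<in> carrier_vec k. (\<Sum>i<k. cnj (v $ i) * (A *\<^sub>v v) $ i) \<in> \<real> \<and>
                           0 \<le> Re (\<Sum>i<k. cnj (v $ i) * (A *\<^sub>v v) $ i))"

definition density :: "nat \<Rightarrow> cmat \<Rightarrow> bool" where
  "density k \<sigma> \<longleftrightarrow> psd k \<sigma> \<and> mtrace \<sigma> = 1"

definition kron :: "cmat \<Rightarrow> cmat \<Rightarrow> cmat" where
  "kron A B = mat (dim_row A * dim_row B) (dim_col A * dim_col B)
     (\<lambda>(i, j). A $$ (i div dim_row B, j div dim_col B) * B $$ (i mod dim_row B, j mod dim_col B))"

definition msum :: "nat \<Rightarrow> nat \<Rightarrow> ('i \<Rightarrow> cmat) \<Rightarrow> 'i set \<Rightarrow> cmat" where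
  "msum k l f S = mat k l (\<lambda>ij. \<Sum>s\<in>S. f s $$ ij)"

abbreviation qdim :: "nat \<Rightarrow> nat" where "qdim n \<equiv> 2 ^ n"

definition ketbra :: "nat \<Rightarrow> nat \<Rightarrow> nat \<Rightarrow> cmat" where
  "ketbra d i j = mat d d (\<lambda>(r, c). if r = i \<and> c = j then 1 else 0)"

definition choi :: "nat \<Rightarrow> (cmat \<Rightarrow> cmat) \<Rightarrow> cmat" where
  "choi d N = msum (d * d) (d * d) (\<lambda>(i, j). kron (ketbra d i j) (N (ketbra d i j))) ({..<d} \<times> {..<d})"

definition channel_test :: "nat \<Rightarrow> cmat \<Rightarrow> bool" where
  "channel_test n E \<longleftrightarrow> psd (qdim n * qdim n) E \<and>
     (\<exists>\<sigma>. density (qdim n) \<sigma> \<and> psd (qdim n * qdim n) (kron \<sigma> (1\<^sub>m (qdim n)) - E))"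

definition pauliX :: cmat where
  "pauliX = mat 2 2 (\<lambda>(r, c). if r \<noteq> c then 1 else 0)"

definition pauliZ :: cmat where
  "pauliZ = mat 2 2 (\<lambda>(r, c). if r = c then (if r = 0 then 1 else -1) else 0)"

fun kron_list :: "cmat list \<Rightarrow> cmat" where
  "kron_list [] = 1\<^sub>m 1"
| "kron_list (A # As) = kron A (kron_list As)"

definition Zpow :: "bool list \<Rightarrow> cmat" where
  "Zpow zs = kron_list (map (\<lambda>z. if z then pauliZ else 1\<^sub>m 2) zs)"

definition Xpow :: "bool list \<Rightarrow> cmat" where
  "Xpow xs = kron_list (map (\<lambda>x. if x then pauliX else 1\<^sub>m 2) xs)"

definition bdot :: "bool list \<Rightarrow> bool list \<Rightarrow> nat" where
  "bdot zs xs = length (filter (\<lambda>(z, x). z \<and> x) (zip zs xs))"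

definition pauli :: "bool list \<Rightarrow> bool list \<Rightarrow> cmat" where
  "pauli zs xs = (\<i> ^ bdot zs xs) \<cdot>\<^sub>m (Zpow zs * Xpow xs)"

definition pauli_idx :: "nat \<Rightarrow> (bool list \<times> bool list) set" where
  "pauli_idx n = {(zs, xs). length zs = n \<and> length xs = n}"

definition prob_vec :: "nat \<Rightarrow> (bool list \<times> bool list \<Rightarrow> real) \<Rightarrow> bool" where
  "prob_vec n p \<longleftrightarrow> (\<forall>k \<in> pauli_idx n. 0 \<le> p k) \<and> (\<Sum>k \<in> pauli_idx n. p k) = 1"

definition pauli_channel :: "nat \<Rightarrow> (bool list \<times> bool list \<Rightarrow> real) \<Rightarrow> cmat \<Rightarrow> cmat" where
  "pauli_channel n p \<rho> =
     msum (qdim n) (qdim n)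
       (\<lambda>(zs, xs). complex_of_real (p (zs, xs)) \<cdot>\<^sub>m (pauli zs xs * \<rho> * adj (pauli zs xs)))
       (pauli_idx n)"

definition PAULI' :: "nat \<Rightarrow> cmat set" where
  "PAULI' n = {choi (qdim n) (pauli_channel n p) | p. prob_vec n p}"

definition pred :: "cmat \<Rightarrow> cmat \<Rightarrow> real" where
  "pred E N = Re (mtrace (E * N))"

end

theory Submission
  imports Defs
begin

text \<open>
  Let \<open>v\<^sub>k = \<Sum>\<^sub>i |i\<rangle> \<otimes> P\<^sub>k|i\<rangle>\<close> be the vectorisation of the \<open>k\<close>-th Pauli operator. The Choi
  matrix of the Pauli channel with probabilities \<open>p\<close> is \<open>\<Sum>\<^sub>k p\<^sub>k |v\<^sub>k\<rangle>\<langle>v\<^sub>k|\<close>, so the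
  prediction \<open>Tr[E C]\<close> is the \<open>p\<close>-average of the overlaps \<open>\<langle>v\<^sub>k|E|v\<^sub>k\<rangle>\<close>. As \<open>P\<^sub>k\<close> is
  unitary, \<open>\<langle>v\<^sub>k|\<sigma> \<otimes> 1|v\<^sub>k\<rangle> = Tr \<sigma> = 1\<close>, so \<open>0 \<le> E \<le> \<sigma> \<otimes> 1\<close> puts every overlap
  in \<open>[0, 1]\<close>. Learning Pauli channels is thus online convex optimisation over the simplex
  of the \<open>4\<^sup>n\<close> Pauli labels, with losses \<open>\<ell>(\<langle>p, f\<^sub>t\<rangle> - b\<^sub>t)\<close> for feature vectors \<open>f\<^sub>t\<close>
  with entries in \<open>[0, 1]\<close>. Replacing \<open>\<ell>\<close> by a subgradient of modulus at most \<open>L\<close> at the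
  current prediction and running exponential weights on the linearised losses, rescaled
  into \<open>[0, 1]\<close>, gives regret at most \<open>2 L (ln 4\<^sup>n / \<eta> + \<eta> T)\<close>, which is \<open>6 L \<surd>(n T)\<close>
  for \<open>\<eta> = \<surd>(n / T)\<close>.
\<close>

section \<open>Subgradients of Lipschitz convex functions\<close>

lemma convex_on_slope_mono:
  fixes f :: "real \<Rightarrow> real"
  assumes "convex_on I f" "w \<in> I" "y \<in> I" "w < x" "x < y"
  shows "(f x - f w) / (x - w) \<le> (f y - f x) / (y - x)"
proof -
  have "(f w - f x) / (w - x) \<le> (f x - f y) / (x - y)"
    using convex_on_slope_le[OF assms] by linarith
  moreover have "(u - v) / (p - q) = (v - u) / (q - p)" for u v p q :: real
    by (metis minus_diff_eq minus_divide_divide)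
  ultimately show ?thesis
    by metis
qed

lemma convex_on_Lipschitz_subgradient:
  fixes f :: "real \<Rightarrow> real"
  assumes convex: "convex_on {a..b} f"
    and lipschitz: "\<forall>x\<in>{a..b}. \<forall>y\<in>{a..b}. \<bar>f x - f y\<bar> \<le> L * \<bar>x - y\<bar>"
    and "0 \<le> L" and x: "x \<in> {a..b}"
  shows "\<exists>s. \<bar>s\<bar> \<le> L \<and> (\<forall>y\<in>{a..b}. f x + s * (y - x) \<le> f y)"
proof (cases "x = a")
  case True
  have "f x - L * (y - x) \<le> f y" if "y \<in> {a..b}" for y
    using lipschitz x that True by (force simp: abs_le_iff)
  then show ?thesis
    using \<open>0 \<le> L\<close> by (intro exI[of _ "-L"]) auto
next
  case False
  then have "a < x"
    using x by auto
  define slope where "slope w = (f x - f w) / (x - w)" for w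
  have slope_bound: "\<bar>slope w\<bar> \<le> L" if "w \<in> {a..<x}" for w
  proof -
    have "\<bar>f x - f w\<bar> \<le> L * \<bar>x - w\<bar>"
      using lipschitz x that by (meson atLeastAtMost_iff atLeastLessThan_iff less_imp_le order_trans)
    then show ?thesis
      using that by (simp add: slope_def abs_divide divide_le_eq)
  qed
  define s where "s = (SUP w\<in>{a..<x}. slope w)"
  have left: "slope w \<le> s" if "w \<in> {a..<x}" for w
    unfolding s_def using slope_bound that by (intro cSUP_upper bdd_aboveI2) (auto simp: abs_le_iff)
  have right: "s \<le> (f y - f x) / (y - x)" if "y \<in> {a..b}" "x < y" for y
    unfolding s_def slope_def
    using convex_on_slope_mono[OF convex _ that(1)] x that(2) \<open>a < x\<close> by (intro cSUP_least) auto
  show ?thesis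
  proof (intro exI[of _ s] conjI ballI)
    have "s \<le> L"
      unfolding s_def using slope_bound \<open>a < x\<close> by (intro cSUP_least) (auto simp: abs_le_iff)
    then show "\<bar>s\<bar> \<le> L"
      using left[of a] slope_bound[of a] \<open>a < x\<close> by auto
    fix y assume y: "y \<in> {a..b}"
    consider "y < x" | "y = x" | "x < y"
      by linarith
    then show "f x + s * (y - x) \<le> f y"
    proof cases
      case 1
      then show ?thesis
        using left[of y] y by (simp add: slope_def divide_le_eq algebra_simps)
    next
      case 3
      then show ?thesis
        using right[OF y] by (simp add: le_divide_eq algebra_simps)
    qed simp
  qed
qed

definition lipschitz_subgradient :: "real \<Rightarrow> (real \<Rightarrow> real) \<Rightarrow> real set \<Rightarrow> real \<Rightarrow> real" where
  "lipschitz_subgradient L f S x = (SOME s. \<bar>s\<bar> \<le> L \<and> (\<forall>y\<in>S. f x + s * (y - x) \<le> f y))"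

lemma lipschitz_subgradient:
  fixes f :: "real \<Rightarrow> real"
  assumes "convex_on {a..b} f"
    and "\<forall>x\<in>{a..b}. \<forall>y\<in>{a..b}. \<bar>f x - f y\<bar> \<le> L * \<bar>x - y\<bar>"
    and "0 \<le> L" and "x \<in> {a..b}"
  shows "\<bar>lipschitz_subgradient L f {a..b} x\<bar> \<le> L"
    and "y \<in> {a..b} \<Longrightarrow> f x + lipschitz_subgradient L f {a..b} x * (y - x) \<le> f y"
  using someI_ex[OF convex_on_Lipschitz_subgradient[OF assms]]
  unfolding lipschitz_subgradient_def by blast+

section \<open>Exponential weights\<close>

definition exp_weights :: "'k set \<Rightarrow> real \<Rightarrow> ('k \<Rightarrow> real) \<Rightarrow> 'k \<Rightarrow> real" where
  "exp_weights K \<eta> c k = exp (- \<eta> * c k) / (\<Sum>j\<in>K. exp (- \<eta> * c j))"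

lemma exp_weights_nonneg: "0 \<le> exp_weights K \<eta> c k"
  unfolding exp_weights_def by (intro divide_nonneg_nonneg sum_nonneg) auto

lemma sum_exp_weights:
  assumes "finite K" "K \<noteq> {}"
  shows "(\<Sum>k\<in>K. exp_weights K \<eta> c k) = 1"
proof -
  have "(\<Sum>j\<in>K. exp (- \<eta> * c j)) > 0"
    using assms by (intro sum_pos) auto
  then show ?thesis
    unfolding exp_weights_def by (simp add: sum_divide_distrib[symmetric])
qed

lemma convex_combination_in_unit_interval:
  fixes w g :: "'k \<Rightarrow> real"
  assumes "finite K" "\<And>k. k \<in> K \<Longrightarrow> 0 \<le> w k" "(\<Sum>k\<in>K. w k) = 1"
    and "\<And>k. k \<in> K \<Longrightarrow> 0 \<le> g k \<and> g k \<le> 1"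
  shows "0 \<le> (\<Sum>k\<in>K. w k * g k) \<and> (\<Sum>k\<in>K. w k * g k) \<le> 1"
proof
  show "0 \<le> (\<Sum>k\<in>K. w k * g k)"
    using assms by (intro sum_nonneg) auto
  have "(\<Sum>k\<in>K. w k * g k) \<le> (\<Sum>k\<in>K. w k * 1)"
    using assms by (intro sum_mono mult_left_mono) auto
  then show "(\<Sum>k\<in>K. w k * g k) \<le> 1"
    using assms(3) by simp
qed

lemma exp_le_one_plus_square:
  fixes y :: real
  assumes "y \<le> 0"
  shows "exp y \<le> 1 + y + y\<^sup>2"
proof -
  have pos: "0 < 1 - y"
    using assms by simp
  have "exp y = 1 / exp (-y)"
    by (simp add: exp_minus field_simps)
  also have "\<dots> \<le> 1 / (1 - y)"
    using exp_ge_add_one_self[of "-y"] pos by (intro divide_left_mono) auto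
  also have "\<dots> \<le> 1 + y + y\<^sup>2"
  proof -
    have "(1 + y + y\<^sup>2) * (1 - y) = 1 - y * y\<^sup>2"
      by (simp add: algebra_simps power2_eq_square)
    moreover have "y * y\<^sup>2 \<le> 0"
      using assms by (simp add: mult_nonpos_nonneg)
    ultimately show ?thesis
      using pos by (simp add: divide_le_eq)
  qed
  finally show ?thesis .
qed

lemma weighted_exp_neg_le:
  fixes p l :: "'k \<Rightarrow> real"
  assumes p: "\<And>k. k \<in> K \<Longrightarrow> 0 \<le> p k" "(\<Sum>k\<in>K. p k) = 1" and "0 \<le> \<eta>"
    and l: "\<And>k. k \<in> K \<Longrightarrow> 0 \<le> l k \<and> l k \<le> 1"
  shows "(\<Sum>k\<in>K. p k * exp (- \<eta> * l k)) \<le> 1 - \<eta> * (\<Sum>k\<in>K. p k * l k) + \<eta>\<^sup>2"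
proof -
  have "(\<Sum>k\<in>K. p k * exp (- \<eta> * l k)) \<le> (\<Sum>k\<in>K. p k * (1 - \<eta> * l k + \<eta>\<^sup>2))"
  proof (intro sum_mono mult_left_mono)
    fix k assume "k \<in> K"
    then have "0 \<le> l k" "l k \<le> 1"
      using l by auto
    then have "(\<eta> * l k)\<^sup>2 \<le> \<eta>\<^sup>2"
      using \<open>0 \<le> \<eta>\<close> by (simp add: power_mult_distrib power_le_one mult_left_le)
    moreover have "exp (- \<eta> * l k) \<le> 1 + (- \<eta> * l k) + (- \<eta> * l k)\<^sup>2"
      using \<open>0 \<le> l k\<close> \<open>0 \<le> \<eta>\<close> by (intro exp_le_one_plus_square) simp
    ultimately show "exp (- \<eta> * l k) \<le> 1 - \<eta> * l k + \<eta>\<^sup>2"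
      by (simp add: power2_eq_square)
  qed (use p in auto)
  also have "\<dots> = (\<Sum>k\<in>K. p k) * (1 + \<eta>\<^sup>2) - \<eta> * (\<Sum>k\<in>K. p k * l k)"
    by (simp add: algebra_simps sum.distrib sum_distrib_left sum_distrib_right sum_subtractf)
  finally show ?thesis
    using p(2) by simp
qed

lemma ln_sum_exp_step:
  fixes c l :: "'k \<Rightarrow> real"
  assumes K: "finite K" "K \<noteq> {}" and "0 \<le> \<eta>"
    and l: "\<And>k. k \<in> K \<Longrightarrow> 0 \<le> l k \<and> l k \<le> 1"
  shows "ln (\<Sum>k\<in>K. exp (- \<eta> * (c k + l k)))
           \<le> ln (\<Sum>k\<in>K. exp (- \<eta> * c k)) - \<eta> * (\<Sum>k\<in>K. exp_weights K \<eta> c k * l k) + \<eta>\<^sup>2"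
proof -
  define W where "W = (\<Sum>k\<in>K. exp (- \<eta> * c k))"
  define p where "p = exp_weights K \<eta> c"
  define X where "X = (\<Sum>k\<in>K. p k * exp (- \<eta> * l k))"
  have "W > 0"
    unfolding W_def using K by (intro sum_pos) auto
  have "p k = exp (- \<eta> * c k) / W" for k
    by (simp add: p_def exp_weights_def W_def)
  then have "W * X = (\<Sum>k\<in>K. W * (exp (- \<eta> * c k) / W) * exp (- \<eta> * l k))"
    using \<open>W > 0\<close> by (simp add: X_def sum_distrib_left mult.assoc)
  also have "\<dots> = (\<Sum>k\<in>K. exp (- \<eta> * (c k + l k)))"
    using \<open>W > 0\<close> by (simp add: distrib_left exp_add[symmetric])
  finally have next_W: "(\<Sum>k\<in>K. exp (- \<eta> * (c k + l k))) = W * X" ..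
  have "X \<le> 1 - \<eta> * (\<Sum>k\<in>K. p k * l k) + \<eta>\<^sup>2"
    unfolding X_def p_def using sum_exp_weights[OF K] exp_weights_nonneg \<open>0 \<le> \<eta>\<close> l
    by (intro weighted_exp_neg_le) auto
  moreover have "X > 0"
    unfolding X_def p_def exp_weights_def using K \<open>W > 0\<close>[unfolded W_def]
    by (intro sum_pos) auto
  then have "ln (W * X) \<le> ln W + (X - 1)"
    using \<open>W > 0\<close> ln_le_minus_one[of X] by (simp add: ln_mult)
  ultimately show ?thesis
    unfolding next_W by (simp add: W_def p_def)
qed

lemma exp_weights_regret:
  fixes l :: "nat \<Rightarrow> 'k \<Rightarrow> real"
  assumes K: "finite K" "k0 \<in> K" and "\<eta> > 0"
    and l: "\<And>t k. t < T \<Longrightarrow> k \<in> K \<Longrightarrow> 0 \<le> l t k \<and> l t k \<le> 1"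
  shows "(\<Sum>t<T. \<Sum>k\<in>K. exp_weights K \<eta> (\<lambda>k. \<Sum>s<t. l s k) k * l t k) - (\<Sum>t<T. l t k0)
           \<le> ln (card K) / \<eta> + \<eta> * T"
proof -
  define \<Phi> where "\<Phi> t = ln (\<Sum>k\<in>K. exp (- \<eta> * (\<Sum>s<t. l s k)))" for t
  define loss where "loss t = (\<Sum>k\<in>K. exp_weights K \<eta> (\<lambda>k. \<Sum>s<t. l s k) k * l t k)" for t
  have "K \<noteq> {}"
    using K by auto
  have step: "\<Phi> (Suc t) - \<Phi> t \<le> \<eta>\<^sup>2 - \<eta> * loss t" if "t < T" for t
    using ln_sum_exp_step[OF K(1) \<open>K \<noteq> {}\<close>, of \<eta> "l t" "\<lambda>k. \<Sum>s<t. l s k"] \<open>\<eta> > 0\<close> l that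
    by (simp add: \<Phi>_def loss_def)
  have "\<Phi> T - \<Phi> 0 = (\<Sum>t<T. \<Phi> (Suc t) - \<Phi> t)"
    by (simp add: sum_lessThan_telescope)
  also have "\<dots> \<le> (\<Sum>t<T. \<eta>\<^sup>2 - \<eta> * loss t)"
    using step by (intro sum_mono) auto
  also have "\<dots> = \<eta>\<^sup>2 * T - \<eta> * (\<Sum>t<T. loss t)"
    by (simp add: sum_subtractf sum_distrib_left)
  finally have potential_drop: "\<Phi> T - \<Phi> 0 \<le> \<eta>\<^sup>2 * T - \<eta> * (\<Sum>t<T. loss t)" .
  have "\<Phi> 0 = ln (card K)"
    by (simp add: \<Phi>_def)
  moreover have "- (\<eta> * (\<Sum>t<T. l t k0)) \<le> \<Phi> T"
  proof -
    have "exp (- \<eta> * (\<Sum>s<T. l s k0)) \<le> (\<Sum>k\<in>K. exp (- \<eta> * (\<Sum>s<T. l s k)))"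
      using K by (intro member_le_sum) auto
    then show ?thesis
      unfolding \<Phi>_def by (subst ln_exp[symmetric]) (intro ln_mono; simp)
  qed
  ultimately have "\<eta> * ((\<Sum>t<T. loss t) - (\<Sum>t<T. l t k0)) \<le> ln (card K) + \<eta>\<^sup>2 * T"
    unfolding right_diff_distrib using potential_drop by linarith
  then have "(\<Sum>t<T. loss t) - (\<Sum>t<T. l t k0) \<le> (ln (card K) + \<eta>\<^sup>2 * T) / \<eta>"
    using \<open>\<eta> > 0\<close> by (simp add: pos_le_divide_eq mult.commute)
  also have "\<dots> = ln (card K) / \<eta> + \<eta> * T"
    using \<open>\<eta> > 0\<close> by (simp add: field_simps power2_eq_square)
  finally show ?thesis
    by (simp add: loss_def)
qed

lemma exp_weights_regret_distribution:
  fixes l :: "nat \<Rightarrow> 'k \<Rightarrow> real"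
  assumes K: "finite K" "K \<noteq> {}" and "\<eta> > 0"
    and l: "\<And>t k. t < T \<Longrightarrow> k \<in> K \<Longrightarrow> 0 \<le> l t k \<and> l t k \<le> 1"
    and q: "\<And>k. k \<in> K \<Longrightarrow> 0 \<le> q k" "(\<Sum>k\<in>K. q k) = 1"
  shows "(\<Sum>t<T. \<Sum>k\<in>K. exp_weights K \<eta> (\<lambda>k. \<Sum>s<t. l s k) k * l t k)
           - (\<Sum>t<T. \<Sum>k\<in>K. q k * l t k) \<le> ln (card K) / \<eta> + \<eta> * T"
proof -
  define A where "A = (\<Sum>t<T. \<Sum>k\<in>K. exp_weights K \<eta> (\<lambda>k. \<Sum>s<t. l s k) k * l t k)"
  have "(\<Sum>k\<in>K. q k * (A - (\<Sum>t<T. l t k))) = (\<Sum>k\<in>K. q k) * A - (\<Sum>k\<in>K. \<Sum>t<T. q k * l t k)"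
    by (simp add: right_diff_distrib sum_subtractf sum_distrib_left sum_distrib_right)
  also have "\<dots> = A - (\<Sum>t<T. \<Sum>k\<in>K. q k * l t k)"
    using sum.swap[of "\<lambda>k t. q k * l t k" "{..<T}" K] q(2) by simp
  finally have "A - (\<Sum>t<T. \<Sum>k\<in>K. q k * l t k) = (\<Sum>k\<in>K. q k * (A - (\<Sum>t<T. l t k)))" ..
  also have "\<dots> \<le> (\<Sum>k\<in>K. q k * (ln (card K) / \<eta> + \<eta> * T))"
    unfolding A_def using exp_weights_regret[OF K(1) _ \<open>\<eta> > 0\<close> l] q(1)
    by (intro sum_mono mult_left_mono) auto
  also have "\<dots> = ln (card K) / \<eta> + \<eta> * T"
    using q(2) by (simp add: sum_distrib_right[symmetric])
  finally show ?thesis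
    unfolding A_def .
qed

lemma exp_weights_signed_linear_regret:
  fixes f :: "nat \<Rightarrow> 'k \<Rightarrow> real" and s :: "nat \<Rightarrow> real"
  assumes K: "finite K" "K \<noteq> {}" and "\<eta> > 0" and "0 \<le> L"
    and f: "\<And>t k. t < T \<Longrightarrow> k \<in> K \<Longrightarrow> 0 \<le> f t k \<and> f t k \<le> 1"
    and s: "\<And>t. t < T \<Longrightarrow> \<bar>s t\<bar> \<le> L"
    and q: "\<And>k. k \<in> K \<Longrightarrow> 0 \<le> q k" "(\<Sum>k\<in>K. q k) = 1"
  shows "(\<Sum>t<T. s t * ((\<Sum>k\<in>K. exp_weights K \<eta> (\<lambda>k. \<Sum>u<t. (1 + s u * f u k / L) / 2) k * f t k)
                        - (\<Sum>k\<in>K. q k * f t k)))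
         \<le> 2 * L * (ln (card K) / \<eta> + \<eta> * T)"
proof (cases "L = 0")
  case True
  then show ?thesis
    using s by simp
next
  case False
  with \<open>0 \<le> L\<close> have "L > 0"
    by simp
  define l where "l t k = (1 + s t * f t k / L) / 2" for t k
  define P where "P t = exp_weights K \<eta> (\<lambda>k. \<Sum>u<t. l u k)" for t
  have l: "0 \<le> l t k \<and> l t k \<le> 1" if "t < T" "k \<in> K" for t k
  proof -
    have "\<bar>s t\<bar> * f t k \<le> L * 1"
      using s[OF that(1)] f[OF that] by (intro mult_mono) auto
    then have "\<bar>s t * f t k\<bar> \<le> L"
      using f[OF that] by (simp add: abs_mult)
    then show ?thesis
      using \<open>L > 0\<close> by (simp add: l_def abs_le_iff field_simps)
  qed
  have affine: "(\<Sum>k\<in>K. w k * l t k) = 1/2 + s t / (2 * L) * (\<Sum>k\<in>K. w k * f t k)"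
    if "(\<Sum>k\<in>K. w k) = 1" for w t
  proof -
    have "(\<Sum>k\<in>K. w k * l t k) = (\<Sum>k\<in>K. w k / 2 + s t / (2 * L) * (w k * f t k))"
      using \<open>L > 0\<close> by (intro sum.cong refl) (simp add: l_def field_simps)
    also have "\<dots> = (\<Sum>k\<in>K. w k) / 2 + s t / (2 * L) * (\<Sum>k\<in>K. w k * f t k)"
      by (simp add: sum.distrib sum_divide_distrib[symmetric] sum_distrib_left)
    finally show ?thesis
      using that by simp
  qed
  have "s t * ((\<Sum>k\<in>K. P t k * f t k) - (\<Sum>k\<in>K. q k * f t k))
        = 2 * L * ((\<Sum>k\<in>K. P t k * l t k) - (\<Sum>k\<in>K. q k * l t k))" for t
  proof -
    have "(\<Sum>k\<in>K. P t k) = 1"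
      unfolding P_def using K by (rule sum_exp_weights)
    then have "(\<Sum>k\<in>K. P t k * l t k) - (\<Sum>k\<in>K. q k * l t k)
        = s t / (2 * L) * ((\<Sum>k\<in>K. P t k * f t k) - (\<Sum>k\<in>K. q k * f t k))"
      using affine q(2) by (simp add: right_diff_distrib)
    then show ?thesis
      using \<open>L > 0\<close> by simp
  qed
  then have "(\<Sum>t<T. s t * ((\<Sum>k\<in>K. P t k * f t k) - (\<Sum>k\<in>K. q k * f t k)))
        = 2 * L * ((\<Sum>t<T. \<Sum>k\<in>K. P t k * l t k) - (\<Sum>t<T. \<Sum>k\<in>K. q k * l t k))"
    by (simp add: sum_distrib_left[symmetric] sum_subtractf)
  also have "\<dots> \<le> 2 * L * (ln (card K) / \<eta> + \<eta> * T)"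
    unfolding P_def using exp_weights_regret_distribution[OF K \<open>\<eta> > 0\<close> l q] \<open>L > 0\<close>
    by (intro mult_left_mono) auto
  finally show ?thesis
    by (simp add: P_def l_def)
qed

section \<open>Online convex optimisation over the simplex\<close>

definition hedge_cumulative_loss ::
    "'k set \<Rightarrow> real \<Rightarrow> (('k \<Rightarrow> real) \<Rightarrow> 'a \<Rightarrow> 'k \<Rightarrow> real) \<Rightarrow> 'a list \<Rightarrow> 'k \<Rightarrow> real" where
  "hedge_cumulative_loss K \<eta> loss = foldl (\<lambda>c a k. c k + loss (exp_weights K \<eta> c) a k) (\<lambda>k. 0)"

lemma hedge_cumulative_loss_upt:
  "hedge_cumulative_loss K \<eta> loss (map a [0..<t])
     = (\<lambda>k. \<Sum>u<t. loss (exp_weights K \<eta> (hedge_cumulative_loss K \<eta> loss (map a [0..<u]))) (a u) k)"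
  by (induction t) (simp_all add: hedge_cumulative_loss_def)

text \<open>For \<open>L = 0\<close> the division by \<open>L\<close> returns \<open>0\<close>; this is harmless because the subgradient
  then vanishes as well.\<close>

definition linearized_loss ::
    "real \<Rightarrow> (real \<Rightarrow> real) \<Rightarrow> 'k set \<Rightarrow> ('e \<Rightarrow> 'k \<Rightarrow> real) \<Rightarrow> ('k \<Rightarrow> real) \<Rightarrow> 'e \<times> real \<Rightarrow> 'k \<Rightarrow> real"
  where
  "linearized_loss L lf K F w =
     (\<lambda>(e, b) k. (1 + lipschitz_subgradient L lf {-1..1} ((\<Sum>j\<in>K. w j * F e j) - b) * F e k / L) / 2)"

definition convex_hedge ::
    "real \<Rightarrow> (real \<Rightarrow> real) \<Rightarrow> 'k set \<Rightarrow> ('e \<Rightarrow> 'k \<Rightarrow> real) \<Rightarrow> real \<Rightarrow> ('e \<times> real) list \<Rightarrow> 'k \<Rightarrow> real"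
  where
  "convex_hedge L lf K F \<eta> h = exp_weights K \<eta> (hedge_cumulative_loss K \<eta> (linearized_loss L lf K F) h)"

lemma convex_hedge_regret:
  fixes lf :: "real \<Rightarrow> real" and F :: "'e \<Rightarrow> 'k \<Rightarrow> real"
  assumes K: "finite K" "K \<noteq> {}" and "\<eta> > 0"
    and convex: "convex_on {-1..1} lf"
    and lipschitz: "\<forall>x\<in>{-1..1}. \<forall>y\<in>{-1..1}. \<bar>lf x - lf y\<bar> \<le> L * \<bar>x - y\<bar>"
    and data: "\<And>t. t < T \<Longrightarrow> (\<forall>k\<in>K. 0 \<le> F (e t) k \<and> F (e t) k \<le> 1) \<and> 0 \<le> b t \<and> b t \<le> 1"
    and q: "\<And>k. k \<in> K \<Longrightarrow> 0 \<le> q k" "(\<Sum>k\<in>K. q k) = 1"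
  shows "(\<Sum>t<T. lf ((\<Sum>k\<in>K. convex_hedge L lf K F \<eta> (map (\<lambda>s. (e s, b s)) [0..<t]) k * F (e t) k) - b t))
         - (\<Sum>t<T. lf ((\<Sum>k\<in>K. q k * F (e t) k) - b t))
         \<le> 2 * L * (ln (card K) / \<eta> + \<eta> * T)"
proof -
  have "0 \<le> L"
    using lipschitz[rule_format, of 1 "-1"] by simp
  define W where "W t = convex_hedge L lf K F \<eta> (map (\<lambda>s. (e s, b s)) [0..<t])" for t
  define x where "x t = (\<Sum>k\<in>K. W t k * F (e t) k) - b t" for t
  define y where "y t = (\<Sum>k\<in>K. q k * F (e t) k) - b t" for t
  define s where "s t = lipschitz_subgradient L lf {-1..1} (x t)" for t
  have W_upt: "W t = exp_weights K \<eta> (\<lambda>k. \<Sum>u<t. linearized_loss L lf K F (W u) (e u, b u) k)" for t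
    unfolding W_def convex_hedge_def by (subst hedge_cumulative_loss_upt) simp
  have "linearized_loss L lf K F (W u) (e u, b u) = (\<lambda>k. (1 + s u * F (e u) k / L) / 2)" for u
    by (simp add: linearized_loss_def s_def x_def)
  then have W_eq: "W t = exp_weights K \<eta> (\<lambda>k. \<Sum>u<t. (1 + s u * F (e u) k / L) / 2)" for t
    using W_upt[of t] by simp
  have x: "x t \<in> {-1..1}" if "t < T" for t
  proof -
    have "0 \<le> (\<Sum>k\<in>K. W t k * F (e t) k) \<and> (\<Sum>k\<in>K. W t k * F (e t) k) \<le> 1"
      using data[OF that] sum_exp_weights[OF K]
      by (intro convex_combination_in_unit_interval[OF K(1)]) (auto simp: W_eq exp_weights_nonneg)
    then show ?thesis
      using data[OF that] by (simp add: x_def)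
  qed
  have y: "y t \<in> {-1..1}" if "t < T" for t
  proof -
    have "0 \<le> (\<Sum>k\<in>K. q k * F (e t) k) \<and> (\<Sum>k\<in>K. q k * F (e t) k) \<le> 1"
      using data[OF that] q by (intro convex_combination_in_unit_interval[OF K(1)]) auto
    then show ?thesis
      using data[OF that] by (simp add: y_def)
  qed
  have "lf (x t) - lf (y t) \<le> s t * ((\<Sum>k\<in>K. W t k * F (e t) k) - (\<Sum>k\<in>K. q k * F (e t) k))"
    if "t < T" for t
    using lipschitz_subgradient(2)[OF convex lipschitz \<open>0 \<le> L\<close> x[OF that] y[OF that]]
    by (simp add: s_def x_def y_def algebra_simps)
  then have "(\<Sum>t<T. lf (x t)) - (\<Sum>t<T. lf (y t))
      \<le> (\<Sum>t<T. s t * ((\<Sum>k\<in>K. W t k * F (e t) k) - (\<Sum>k\<in>K. q k * F (e t) k)))"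
    unfolding sum_subtractf[symmetric] by (intro sum_mono) auto
  also have "\<dots> \<le> 2 * L * (ln (card K) / \<eta> + \<eta> * T)"
    unfolding W_eq
    using exp_weights_signed_linear_regret[OF K \<open>\<eta> > 0\<close> \<open>0 \<le> L\<close>, of T "\<lambda>t. F (e t)" s q]
      data lipschitz_subgradient(1)[OF convex lipschitz \<open>0 \<le> L\<close> x] q
    by (simp add: s_def)
  finally show ?thesis
    by (simp add: x_def y_def W_def)
qed

section \<open>Unitary matrices and Pauli operators\<close>

lemma index_mult_mat_sum:
  fixes A B :: "'a::comm_ring mat"
  assumes "dim_col A = dim_row B" "i < dim_row A" "j < dim_col B"
  shows "(A * B) $$ (i, j) = (\<Sum>m<dim_row B. A $$ (i, m) * B $$ (m, j))"
  using assms by (simp add: scalar_prod_def atLeast0LessThan)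

lemma mult_add_less_mult:
  fixes i a m k :: nat
  assumes "i < m" "a < k"
  shows "i * k + a < m * k"
proof -
  have "i * k + a < Suc i * k"
    using assms(2) by simp
  also have "\<dots> \<le> m * k"
    using assms(1) by (intro mult_right_mono) auto
  finally show ?thesis .
qed

lemma sum_lessThan_mult:
  fixes f :: "nat \<Rightarrow> 'a::comm_monoid_add"
  shows "(\<Sum>m<a * b. f m) = (\<Sum>i<a. \<Sum>j<b. f (i * b + j))"
proof -
  have "(\<Sum>m<a * b. f m) = (\<Sum>i<a. sum f {i * b..<i * b + b})"
    using sum.nat_group[of f b a] by simp
  also have "\<dots> = (\<Sum>i<a. \<Sum>j<b. f (i * b + j))"
  proof (rule sum.cong[OF refl])
    fix i
    have "sum f {0 + i * b..<b + i * b} = (\<Sum>j\<in>{0..<b}. f (j + i * b))"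
      by (rule sum.shift_bounds_nat_ivl)
    then show "sum f {i * b..<i * b + b} = (\<Sum>j<b. f (i * b + j))"
      by (simp add: atLeast0LessThan add.commute)
  qed
  finally show ?thesis .
qed

lemma dim_kron [simp]:
  "dim_row (kron A B) = dim_row A * dim_row B" "dim_col (kron A B) = dim_col A * dim_col B"
  by (simp_all add: kron_def)

lemma index_kron:
  "i < dim_row A * dim_row B \<Longrightarrow> j < dim_col A * dim_col B \<Longrightarrow>
   kron A B $$ (i, j) = A $$ (i div dim_row B, j div dim_col B) * B $$ (i mod dim_row B, j mod dim_col B)"
  by (simp add: kron_def)

lemma dim_adj [simp]: "dim_row (adj A) = dim_col A" "dim_col (adj A) = dim_row A"
  by (simp_all add: adj_def)

lemma index_adj: "i < dim_col A \<Longrightarrow> j < dim_row A \<Longrightarrow> adj A $$ (i, j) = cnj (A $$ (j, i))"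
  by (simp add: adj_def)

lemma adj_one [simp]: "adj (1\<^sub>m m) = 1\<^sub>m m"
  by (rule eq_matI) (auto simp: index_adj)

lemma adj_mult:
  assumes "A \<in> carrier_mat r c" "B \<in> carrier_mat c k"
  shows "adj (A * B) = adj B * adj A"
proof (rule eq_matI)
  fix i j assume "i < dim_row (adj B * adj A)" "j < dim_col (adj B * adj A)"
  then have ij: "i < k" "j < r"
    using assms by auto
  have "adj (A * B) $$ (i, j) = cnj ((A * B) $$ (j, i))"
    using assms ij by (simp add: index_adj)
  also have "\<dots> = cnj (\<Sum>m<c. A $$ (j, m) * B $$ (m, i))"
    using assms ij by (subst index_mult_mat_sum) auto
  also have "\<dots> = (\<Sum>m<c. adj B $$ (i, m) * adj A $$ (m, j))"
    using assms ij by (simp add: index_adj mult.commute)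
  also have "\<dots> = (adj B * adj A) $$ (i, j)"
    using assms ij by (subst index_mult_mat_sum) auto
  finally show "adj (A * B) $$ (i, j) = (adj B * adj A) $$ (i, j)" .
qed (use assms in auto)

definition unitary :: "nat \<Rightarrow> cmat \<Rightarrow> bool" where
  "unitary m U \<longleftrightarrow> U \<in> carrier_mat m m \<and> adj U * U = 1\<^sub>m m"

lemma unitary_iff_orthonormal_cols:
  assumes "U \<in> carrier_mat m m"
  shows "unitary m U \<longleftrightarrow>
    (\<forall>i<m. \<forall>j<m. (\<Sum>a<m. cnj (U $$ (a, i)) * U $$ (a, j)) = (if i = j then 1 else 0))"
proof -
  have entry: "(adj U * U) $$ (i, j) = (\<Sum>a<m. cnj (U $$ (a, i)) * U $$ (a, j))"
    if "i < m" "j < m" for i j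
    using assms that by (subst index_mult_mat_sum) (auto simp: index_adj)
  show ?thesis
  proof
    assume "unitary m U"
    then show "\<forall>i<m. \<forall>j<m. (\<Sum>a<m. cnj (U $$ (a, i)) * U $$ (a, j)) = (if i = j then 1 else 0)"
      using entry by (metis index_one_mat(1) unitary_def)
  next
    assume "\<forall>i<m. \<forall>j<m. (\<Sum>a<m. cnj (U $$ (a, i)) * U $$ (a, j)) = (if i = j then 1 else 0)"
    then have "adj U * U = 1\<^sub>m m"
      using assms entry by (intro eq_matI) auto
    then show "unitary m U"
      using assms by (simp add: unitary_def)
  qed
qed

lemma unitary_orthonormal_cols:
  "unitary m U \<Longrightarrow> i < m \<Longrightarrow> j < m \<Longrightarrow>
   (\<Sum>a<m. cnj (U $$ (a, i)) * U $$ (a, j)) = (if i = j then 1 else 0)"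
  using unitary_iff_orthonormal_cols unitary_def by blast

lemma unitary_one: "unitary m (1\<^sub>m m)"
  by (simp add: unitary_def)

lemma unitary_mult:
  assumes "unitary m A" "unitary m B"
  shows "unitary m (A * B)"
proof -
  have A: "A \<in> carrier_mat m m" "adj A * A = 1\<^sub>m m"
    and B: "B \<in> carrier_mat m m" "adj B * B = 1\<^sub>m m"
    using assms by (auto simp: unitary_def)
  have adjs: "adj A \<in> carrier_mat m m" "adj B \<in> carrier_mat m m"
    using A(1) B(1) by auto
  have "adj (A * B) * (A * B) = adj B * adj A * (A * B)"
    using A(1) B(1) by (simp add: adj_mult)
  also have "\<dots> = adj B * (adj A * (A * B))"
    by (rule assoc_mult_mat[OF adjs(2) adjs(1) mult_carrier_mat[OF A(1) B(1)]])
  also have "\<dots> = adj B * B"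
    using A B by (simp add: assoc_mult_mat[OF adjs(1) A(1) B(1), symmetric])
  also have "\<dots> = 1\<^sub>m m"
    by (rule B(2))
  finally show ?thesis
    using A(1) B(1) by (simp add: unitary_def)
qed

lemma unitary_smult:
  assumes "unitary m A" "cnj c * c = 1"
  shows "unitary m (c \<cdot>\<^sub>m A)"
proof -
  have A: "A \<in> carrier_mat m m"
    using assms(1) by (simp add: unitary_def)
  have "(\<Sum>a<m. cnj ((c \<cdot>\<^sub>m A) $$ (a, i)) * (c \<cdot>\<^sub>m A) $$ (a, j))
        = (cnj c * c) * (\<Sum>a<m. cnj (A $$ (a, i)) * A $$ (a, j))" if "i < m" "j < m" for i j
    using A that by (simp add: sum_distrib_left mult_ac)
  then show ?thesis
    using A assms unitary_orthonormal_cols[OF assms(1)]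
    by (simp add: unitary_iff_orthonormal_cols)
qed

lemma unitary_kron:
  assumes A: "unitary m A" and B: "unitary k B"
  shows "unitary (m * k) (kron A B)"
proof -
  have carrier: "A \<in> carrier_mat m m" "B \<in> carrier_mat k k"
    using A B by (auto simp: unitary_def)
  have "(\<Sum>a<m * k. cnj (kron A B $$ (a, i)) * kron A B $$ (a, j)) = (if i = j then 1 else 0)"
    if i: "i < m * k" and j: "j < m * k" for i j
  proof -
    have "0 < k"
      using i by (cases k) auto
    then have ij: "i div k < m" "i mod k < k" "j div k < m" "j mod k < k"
      using i j by (auto simp: less_mult_imp_div_less)
    have "(\<Sum>a<m * k. cnj (kron A B $$ (a, i)) * kron A B $$ (a, j))
        = (\<Sum>u<m. \<Sum>v<k. (cnj (A $$ (u, i div k)) * A $$ (u, j div k))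
                          * (cnj (B $$ (v, i mod k)) * B $$ (v, j mod k)))"
      unfolding sum_lessThan_mult
      using carrier i j mult_add_less_mult by (intro sum.cong refl) (auto simp: index_kron)
    also have "\<dots> = (\<Sum>u<m. cnj (A $$ (u, i div k)) * A $$ (u, j div k))
                   * (\<Sum>v<k. cnj (B $$ (v, i mod k)) * B $$ (v, j mod k))"
      by (simp add: sum_product)
    also have "\<dots> = (if i div k = j div k \<and> i mod k = j mod k then 1 else 0)"
      using unitary_orthonormal_cols[OF A] unitary_orthonormal_cols[OF B] ij by simp
    also have "\<dots> = (if i = j then 1 else 0)"
      by (metis div_mult_mod_eq)
    finally show ?thesis .
  qed
  moreover have "kron A B \<in> carrier_mat (m * k) (m * k)"
    using carrier by auto
  ultimately show ?thesis
    by (simp add: unitary_iff_orthonormal_cols)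
qed

lemma unitary_kron_list: "\<forall>A\<in>set As. unitary 2 A \<Longrightarrow> unitary (2 ^ length As) (kron_list As)"
  by (induction As) (auto simp: unitary_one intro: unitary_kron)

lemma unitary_2x2:
  "U \<in> carrier_mat 2 2 \<Longrightarrow> unitary 2 U \<longleftrightarrow>
     (\<forall>i<2. \<forall>j<2. cnj (U $$ (0, i)) * U $$ (0, j) + cnj (U $$ (1, i)) * U $$ (1, j) = (if i = j then 1 else 0))"
  by (simp add: unitary_iff_orthonormal_cols numeral_2_eq_2)

lemma unitary_pauliZ: "unitary 2 pauliZ"
  by (subst unitary_2x2) (auto simp: pauliZ_def numeral_2_eq_2 less_Suc_eq)

lemma unitary_pauliX: "unitary 2 pauliX"
  by (subst unitary_2x2) (auto simp: pauliX_def numeral_2_eq_2 less_Suc_eq)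

lemma unitary_pauli:
  assumes "length zs = n" "length xs = n"
  shows "unitary (2 ^ n) (pauli zs xs)"
proof -
  have "unitary (2 ^ length (map (\<lambda>z. if z then pauliZ else 1\<^sub>m 2) zs))
      (kron_list (map (\<lambda>z. if z then pauliZ else 1\<^sub>m 2) zs))"
    "unitary (2 ^ length (map (\<lambda>x. if x then pauliX else 1\<^sub>m 2) xs))
      (kron_list (map (\<lambda>x. if x then pauliX else 1\<^sub>m 2) xs))"
    by (rule unitary_kron_list; auto simp: unitary_pauliZ unitary_pauliX unitary_one)+
  then have "unitary (2 ^ n) (Zpow zs)" "unitary (2 ^ n) (Xpow xs)"
    using assms by (simp_all add: Zpow_def Xpow_def)
  then have "unitary (2 ^ n) (Zpow zs * Xpow xs)"
    by (rule unitary_mult)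
  moreover have "cnj (\<i> ^ bdot zs xs) * \<i> ^ bdot zs xs = 1"
    by (simp add: power_mult_distrib[symmetric])
  ultimately show ?thesis
    unfolding pauli_def by (rule unitary_smult)
qed

section \<open>Choi matrices of Pauli channels\<close>

lemma dim_ketbra [simp]: "dim_row (ketbra d i j) = d" "dim_col (ketbra d i j) = d"
  by (simp_all add: ketbra_def)

lemma index_ketbra: "r < d \<Longrightarrow> c < d \<Longrightarrow> ketbra d i j $$ (r, c) = (if r = i \<and> c = j then 1 else 0)"
  by (simp add: ketbra_def)

lemma index_conj_ketbra:
  assumes P: "P \<in> carrier_mat d d" and "i < d" "j < d" "r < d" "c < d"
  shows "(P * ketbra d i j * adj P) $$ (r, c) = P $$ (r, i) * cnj (P $$ (c, j))"
proof -
  have left: "(P * ketbra d i j) $$ (r, m) = (if m = j then P $$ (r, i) else 0)" if "m < d" for m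
  proof -
    have "(P * ketbra d i j) $$ (r, m) = (\<Sum>l<d. P $$ (r, l) * ketbra d i j $$ (l, m))"
      using P assms(4) that by (subst index_mult_mat_sum) auto
    also have "\<dots> = (\<Sum>l<d. if l = i then (if m = j then P $$ (r, i) else 0) else 0)"
      using that by (intro sum.cong refl) (auto simp: index_ketbra)
    finally show ?thesis
      using assms(2) by simp
  qed
  have "(P * ketbra d i j * adj P) $$ (r, c) = (\<Sum>m<d. (P * ketbra d i j) $$ (r, m) * adj P $$ (m, c))"
    using P assms(4,5) by (subst index_mult_mat_sum) auto
  also have "\<dots> = (\<Sum>m<d. if m = j then P $$ (r, i) * cnj (P $$ (c, j)) else 0)"
    using P assms(5) by (intro sum.cong refl) (auto simp: left index_adj)
  finally show ?thesis
    using assms(3) by simp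
qed

lemma index_choi:
  assumes "\<And>i j. \<Phi> (ketbra d i j) \<in> carrier_mat d d" and x: "x < d * d" and y: "y < d * d"
  shows "choi d \<Phi> $$ (x, y) = \<Phi> (ketbra d (x div d) (y div d)) $$ (x mod d, y mod d)"
proof -
  have dims: "dim_row (\<Phi> (ketbra d i j)) = d" "dim_col (\<Phi> (ketbra d i j)) = d" for i j
    using assms(1) by auto
  have "0 < d"
    using x by (cases d) auto
  then have xy: "x div d < d" "x mod d < d" "y div d < d" "y mod d < d"
    using x y by (auto simp: less_mult_imp_div_less)
  have "choi d \<Phi> $$ (x, y)
      = (\<Sum>(i, j)\<in>{..<d} \<times> {..<d}. kron (ketbra d i j) (\<Phi> (ketbra d i j)) $$ (x, y))"
    using x y by (simp add: choi_def msum_def case_prod_unfold)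
  also have "\<dots> = (\<Sum>ij\<in>{..<d} \<times> {..<d}.
      if ij = (x div d, y div d) then \<Phi> (ketbra d (fst ij) (snd ij)) $$ (x mod d, y mod d) else 0)"
    using x y xy by (intro sum.cong refl) (auto simp: index_kron index_ketbra dims split: if_splits)
  also have "\<dots> = \<Phi> (ketbra d (x div d) (y div d)) $$ (x mod d, y mod d)"
    using xy by (simp add: sum.delta)
  finally show ?thesis .
qed

lemma finite_pauli_idx: "finite (pauli_idx n)"
proof -
  have "pauli_idx n = {zs. length zs = n} \<times> {xs. length xs = n}"
    by (auto simp: pauli_idx_def)
  then show ?thesis
    using finite_lists_length_eq[of "UNIV :: bool set" n] by simp
qed

lemma card_pauli_idx: "card (pauli_idx n) = 2 ^ n * 2 ^ n"
proof -
  have "pauli_idx n = {zs. set zs \<subseteq> UNIV \<and> length zs = n} \<times> {xs. set xs \<subseteq> UNIV \<and> length xs = n}"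
    by (auto simp: pauli_idx_def)
  then show ?thesis
    using card_lists_length_eq[of "UNIV :: bool set" n] by (simp add: card_cartesian_product)
qed

lemma pauli_idx_nonempty: "pauli_idx n \<noteq> {}"
  by (auto simp: pauli_idx_def intro!: exI[of _ "replicate n False"])

lemma pauli_carrier: "(zs, xs) \<in> pauli_idx n \<Longrightarrow> pauli zs xs \<in> carrier_mat (qdim n) (qdim n)"
  using unitary_pauli[of zs n xs] by (simp add: pauli_idx_def unitary_def)

lemma index_pauli_channel_ketbra:
  assumes "i < qdim n" "j < qdim n" "r < qdim n" "c < qdim n"
  shows "pauli_channel n p (ketbra (qdim n) i j) $$ (r, c)
       = (\<Sum>(zs, xs)\<in>pauli_idx n. p (zs, xs) * (pauli zs xs $$ (r, i) * cnj (pauli zs xs $$ (c, j))))"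
proof -
  have "(complex_of_real (p (zs, xs)) \<cdot>\<^sub>m (pauli zs xs * ketbra (qdim n) i j * adj (pauli zs xs))) $$ (r, c)
      = p (zs, xs) * (pauli zs xs $$ (r, i) * cnj (pauli zs xs $$ (c, j)))"
    if "(zs, xs) \<in> pauli_idx n" for zs xs
    using index_conj_ketbra[OF pauli_carrier[OF that] assms] carrier_matD[OF pauli_carrier[OF that]] assms
    by (simp del: index_mult_mat(1))
  then show ?thesis
    unfolding pauli_channel_def msum_def using assms by (auto intro!: sum.cong)
qed

definition pauli_vec :: "nat \<Rightarrow> bool list \<times> bool list \<Rightarrow> complex vec" where
  "pauli_vec n = (\<lambda>(zs, xs). vec (qdim n * qdim n) (\<lambda>x. pauli zs xs $$ (x mod qdim n, x div qdim n)))"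

lemma pauli_vec_carrier: "pauli_vec n k \<in> carrier_vec (qdim n * qdim n)"
  by (simp add: pauli_vec_def case_prod_unfold)

lemma index_choi_pauli_channel:
  assumes "x < qdim n * qdim n" "y < qdim n * qdim n"
  shows "choi (qdim n) (pauli_channel n p) $$ (x, y)
       = (\<Sum>k\<in>pauli_idx n. p k * (pauli_vec n k $ x * cnj (pauli_vec n k $ y)))"
proof -
  have "x div qdim n < qdim n" "x mod qdim n < qdim n" "y div qdim n < qdim n" "y mod qdim n < qdim n"
    using assms by (auto simp: less_mult_imp_div_less)
  moreover have "pauli_channel n p \<rho> \<in> carrier_mat (qdim n) (qdim n)" for \<rho>
    by (simp add: pauli_channel_def msum_def)
  ultimately show ?thesis
    using assms
    by (simp add: index_choi index_pauli_channel_ketbra pauli_vec_def case_prod_unfold)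
qed

definition qform :: "nat \<Rightarrow> cmat \<Rightarrow> complex vec \<Rightarrow> complex" where
  "qform D A v = (\<Sum>i<D. cnj (v $ i) * (A *\<^sub>v v) $ i)"

lemma qform_expand:
  assumes "A \<in> carrier_mat D D" "v \<in> carrier_vec D"
  shows "qform D A v = (\<Sum>x<D. \<Sum>y<D. cnj (v $ x) * A $$ (x, y) * v $ y)"
  unfolding qform_def using assms
  by (intro sum.cong refl) (simp add: scalar_prod_def atLeast0LessThan sum_distrib_left mult_ac)

lemma qform_diff:
  assumes "A \<in> carrier_mat D D" "B \<in> carrier_mat D D" "v \<in> carrier_vec D"
  shows "qform D (A - B) v = qform D A v - qform D B v"
proof -
  have "qform D (A - B) v = (\<Sum>x<D. \<Sum>y<D. cnj (v $ x) * (A - B) $$ (x, y) * v $ y)"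
    using assms by (intro qform_expand) auto
  also have "\<dots> = (\<Sum>x<D. \<Sum>y<D. cnj (v $ x) * A $$ (x, y) * v $ y - cnj (v $ x) * B $$ (x, y) * v $ y)"
    using assms by (intro sum.cong refl) (auto simp: left_diff_distrib right_diff_distrib)
  also have "\<dots> = qform D A v - qform D B v"
    using assms by (simp add: qform_expand sum_subtractf)
  finally show ?thesis .
qed

lemma mtrace_mult_sum_rank_one:
  assumes E: "E \<in> carrier_mat D D" and C: "C \<in> carrier_mat D D" and v: "\<And>k. v k \<in> carrier_vec D"
    and entries: "\<And>x y. x < D \<Longrightarrow> y < D \<Longrightarrow> C $$ (y, x) = (\<Sum>k\<in>K. w k * (v k $ y * cnj (v k $ x)))"
  shows "mtrace (E * C) = (\<Sum>k\<in>K. w k * qform D E (v k))"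
proof -
  have "mtrace (E * C) = (\<Sum>x<D. (E * C) $$ (x, x))"
    using E by (simp add: mtrace_def)
  also have "\<dots> = (\<Sum>x<D. \<Sum>y<D. E $$ (x, y) * C $$ (y, x))"
    using E C by (intro sum.cong refl) (subst index_mult_mat_sum; auto)
  also have "\<dots> = (\<Sum>x<D. \<Sum>y<D. \<Sum>k\<in>K. w k * (cnj (v k $ x) * E $$ (x, y) * v k $ y))"
    using entries by (intro sum.cong refl) (simp add: sum_distrib_left mult_ac)
  also have "\<dots> = (\<Sum>k\<in>K. w k * (\<Sum>x<D. \<Sum>y<D. cnj (v k $ x) * E $$ (x, y) * v k $ y))"
    by (simp add: sum_distrib_left sum.swap[of _ K])
  also have "\<dots> = (\<Sum>k\<in>K. w k * qform D E (v k))"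
    using E v by (simp add: qform_expand)
  finally show ?thesis .
qed

lemma qform_kron_one:
  assumes \<sigma>: "\<sigma> \<in> carrier_mat d d" and v: "v \<in> carrier_vec (d * d)"
  shows "qform (d * d) (kron \<sigma> (1\<^sub>m d)) v
       = (\<Sum>i<d. \<Sum>j<d. \<sigma> $$ (i, j) * (\<Sum>a<d. cnj (v $ (i * d + a)) * v $ (j * d + a)))"
proof -
  have K: "kron \<sigma> (1\<^sub>m d) $$ (i * d + a, j * d + b) = (if b = a then \<sigma> $$ (i, j) else 0)"
    if "i < d" "a < d" "j < d" "b < d" for i a j b
    using \<sigma> that mult_add_less_mult[of i d a d] mult_add_less_mult[of j d b d]
    by (subst index_kron) auto
  have "kron \<sigma> (1\<^sub>m d) \<in> carrier_mat (d * d) (d * d)"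
    using \<sigma> by auto
  then have "qform (d * d) (kron \<sigma> (1\<^sub>m d)) v
      = (\<Sum>i<d. \<Sum>a<d. \<Sum>j<d. \<Sum>b<d.
           cnj (v $ (i * d + a)) * kron \<sigma> (1\<^sub>m d) $$ (i * d + a, j * d + b) * v $ (j * d + b))"
    using v by (simp add: qform_expand sum_lessThan_mult)
  also have "\<dots> = (\<Sum>i<d. \<Sum>a<d. \<Sum>j<d. \<Sum>b<d.
           if b = a then cnj (v $ (i * d + a)) * \<sigma> $$ (i, j) * v $ (j * d + a) else 0)"
    by (intro sum.cong refl) (simp add: K)
  also have "\<dots> = (\<Sum>i<d. \<Sum>a<d. \<Sum>j<d. cnj (v $ (i * d + a)) * \<sigma> $$ (i, j) * v $ (j * d + a))"
    by (intro sum.cong refl) (simp add: sum.delta)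
  also have "\<dots> = (\<Sum>i<d. \<Sum>j<d. \<sigma> $$ (i, j) * (\<Sum>a<d. cnj (v $ (i * d + a)) * v $ (j * d + a)))"
    by (rule sum.cong[OF refl]) (subst sum.swap, simp add: sum_distrib_left mult_ac)
  finally show ?thesis .
qed

lemma qform_kron_one_pauli_vec:
  assumes \<sigma>: "\<sigma> \<in> carrier_mat (qdim n) (qdim n)" and k: "k \<in> pauli_idx n"
  shows "qform (qdim n * qdim n) (kron \<sigma> (1\<^sub>m (qdim n))) (pauli_vec n k) = mtrace \<sigma>"
proof -
  obtain zs xs where k_eq: "k = (zs, xs)" and lengths: "length zs = n" "length xs = n"
    using k by (cases k) (auto simp: pauli_idx_def)
  define P where "P = pauli zs xs"
  have "unitary (qdim n) P"
    unfolding P_def using lengths by (rule unitary_pauli)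
  moreover have "pauli_vec n k $ (i * qdim n + a) = P $$ (a, i)" if "i < qdim n" "a < qdim n" for i a
    using that mult_add_less_mult[OF that] by (simp add: pauli_vec_def k_eq P_def)
  ultimately have "qform (qdim n * qdim n) (kron \<sigma> (1\<^sub>m (qdim n))) (pauli_vec n k)
      = (\<Sum>i<qdim n. \<Sum>j<qdim n. \<sigma> $$ (i, j) * (if i = j then 1 else 0))"
    by (simp add: qform_kron_one[OF \<sigma> pauli_vec_carrier] unitary_orthonormal_cols)
  also have "\<dots> = (\<Sum>i<qdim n. \<Sum>j<qdim n. if i = j then \<sigma> $$ (i, j) else 0)"
    by (intro sum.cong refl) simp
  also have "\<dots> = mtrace \<sigma>"
    using \<sigma> by (simp add: mtrace_def)
  finally show ?thesis .
qed

definition pauli_overlap :: "nat \<Rightarrow> cmat \<Rightarrow> bool list \<times> bool list \<Rightarrow> real" where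
  "pauli_overlap n E k = Re (qform (qdim n * qdim n) E (pauli_vec n k))"

lemma choi_carrier: "choi d \<Phi> \<in> carrier_mat (d * d) (d * d)"
  by (simp add: choi_def msum_def)

lemma pred_choi_pauli_channel:
  assumes "E \<in> carrier_mat (qdim n * qdim n) (qdim n * qdim n)"
  shows "pred E (choi (qdim n) (pauli_channel n p)) = (\<Sum>k\<in>pauli_idx n. p k * pauli_overlap n E k)"
proof -
  have "mtrace (E * choi (qdim n) (pauli_channel n p))
      = (\<Sum>k\<in>pauli_idx n. complex_of_real (p k) * qform (qdim n * qdim n) E (pauli_vec n k))"
    using assms choi_carrier pauli_vec_carrier
    by (rule mtrace_mult_sum_rank_one) (simp add: index_choi_pauli_channel)
  then show ?thesis
    by (simp add: pred_def pauli_overlap_def)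
qed

lemma pauli_overlap_bounds:
  assumes E: "channel_test n E" and k: "k \<in> pauli_idx n"
  shows "0 \<le> pauli_overlap n E k \<and> pauli_overlap n E k \<le> 1"
proof -
  define D where "D = qdim n * qdim n"
  obtain \<sigma> where \<sigma>: "density (qdim n) \<sigma>" and dominated: "psd D (kron \<sigma> (1\<^sub>m (qdim n)) - E)"
    using E by (auto simp: channel_test_def D_def)
  have "psd D E"
    using E by (simp add: channel_test_def D_def)
  have carrier: "E \<in> carrier_mat D D" "\<sigma> \<in> carrier_mat (qdim n) (qdim n)"
    using \<open>psd D E\<close> \<sigma> by (simp_all add: psd_def density_def)
  have v: "pauli_vec n k \<in> carrier_vec D"
    by (simp add: pauli_vec_carrier D_def)
  have "0 \<le> Re (qform D E (pauli_vec n k))"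
    using \<open>psd D E\<close> v by (simp add: psd_def qform_def)
  moreover have "0 \<le> Re (qform D (kron \<sigma> (1\<^sub>m (qdim n)) - E) (pauli_vec n k))"
    using dominated v by (simp add: psd_def qform_def)
  moreover have "qform D (kron \<sigma> (1\<^sub>m (qdim n)) - E) (pauli_vec n k) = 1 - qform D E (pauli_vec n k)"
    using carrier v qform_kron_one_pauli_vec[OF carrier(2) k] \<sigma>
    by (subst qform_diff) (auto simp: D_def density_def)
  ultimately show ?thesis
    by (simp add: pauli_overlap_def D_def)
qed

lemma msum_cong: "(\<And>s. s \<in> S \<Longrightarrow> f s = g s) \<Longrightarrow> msum k l f S = msum k l g S"
proof -
  assume "\<And>s. s \<in> S \<Longrightarrow> f s = g s"
  then have "(\<lambda>ij. \<Sum>s\<in>S. f s $$ ij) = (\<lambda>ij. \<Sum>s\<in>S. g s $$ ij)"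
    by (intro ext sum.cong) auto
  then show ?thesis
    unfolding msum_def by simp
qed

lemma pauli_channel_cong:
  "(\<And>k. k \<in> pauli_idx n \<Longrightarrow> p k = q k) \<Longrightarrow> pauli_channel n p = pauli_channel n q"
  unfolding pauli_channel_def by (intro ext msum_cong) (auto simp: case_prod_unfold)

lemma PAULI'_zero:
  assumes "prob_vec 0 p"
  shows "PAULI' 0 = {choi (qdim 0) (pauli_channel 0 p)}"
proof (intro equalityI subsetI)
  fix N assume "N \<in> PAULI' 0"
  then obtain q where q: "prob_vec 0 q" and N: "N = choi (qdim 0) (pauli_channel 0 q)"
    by (auto simp: PAULI'_def)
  have idx: "pauli_idx 0 = {([], [])}"
    by (auto simp: pauli_idx_def)
  have "pauli_channel 0 q = pauli_channel 0 p"
    using q assms by (intro pauli_channel_cong) (simp add: prob_vec_def idx)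
  then show "N \<in> {choi (qdim 0) (pauli_channel 0 p)}"
    using N by simp
qed (use assms in \<open>auto simp: PAULI'_def\<close>)

section \<open>A learner for Pauli channels\<close>

definition pauli_learner :: "nat \<Rightarrow> real \<Rightarrow> (real \<Rightarrow> real) \<Rightarrow> real \<Rightarrow> (cmat \<times> real) list \<Rightarrow> cmat" where
  "pauli_learner n L lf \<eta> h =
     choi (qdim n) (pauli_channel n (convex_hedge L lf (pauli_idx n) (pauli_overlap n) \<eta> h))"

lemma pauli_learner_in_PAULI': "pauli_learner n L lf \<eta> h \<in> PAULI' n"
proof -
  have "prob_vec n (convex_hedge L lf (pauli_idx n) (pauli_overlap n) \<eta> h)"
    using sum_exp_weights[OF finite_pauli_idx pauli_idx_nonempty]
    by (simp add: prob_vec_def convex_hedge_def exp_weights_nonneg)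
  then show ?thesis
    unfolding pauli_learner_def PAULI'_def by blast
qed

lemma ln_card_pauli_idx: "ln (card (pauli_idx n)) \<le> 2 * real n"
proof -
  have "ln (card (pauli_idx n)) = 2 * (real n * ln 2)"
    by (simp add: card_pauli_idx ln_mult ln_realpow)
  also have "\<dots> \<le> 2 * real n"
    using ln_2_less_1 by (simp add: mult_left_le)
  finally show ?thesis .
qed

lemma pauli_learner_regret:
  assumes "\<eta> > 0"
    and convex: "convex_on {-1..1} lf"
    and lipschitz: "\<forall>x\<in>{-1..1}. \<forall>y\<in>{-1..1}. \<bar>lf x - lf y\<bar> \<le> L * \<bar>x - y\<bar>"
    and valid: "\<forall>t<T. channel_test n (E t) \<and> 0 \<le> b t \<and> b t \<le> 1"
    and p: "prob_vec n p"
  shows "(\<Sum>t<T. lf (pred (E t) (pauli_learner n L lf \<eta> (map (\<lambda>s. (E s, b s)) [0..<t])) - b t))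
         - (\<Sum>t<T. lf (pred (E t) (choi (qdim n) (pauli_channel n p)) - b t))
         \<le> 2 * L * (2 * real n / \<eta> + \<eta> * T)"
proof -
  define K where "K = pauli_idx n"
  define W where "W h = convex_hedge L lf K (pauli_overlap n) \<eta> h" for h
  have "E t \<in> carrier_mat (qdim n * qdim n) (qdim n * qdim n)" if "t < T" for t
    using valid that by (simp add: channel_test_def psd_def)
  then have "(\<Sum>t<T. lf (pred (E t) (pauli_learner n L lf \<eta> (map (\<lambda>s. (E s, b s)) [0..<t])) - b t))
         - (\<Sum>t<T. lf (pred (E t) (choi (qdim n) (pauli_channel n p)) - b t))
      = (\<Sum>t<T. lf ((\<Sum>k\<in>K. W (map (\<lambda>s. (E s, b s)) [0..<t]) k * pauli_overlap n (E t) k) - b t))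
         - (\<Sum>t<T. lf ((\<Sum>k\<in>K. p k * pauli_overlap n (E t) k) - b t))"
    by (simp add: pauli_learner_def pred_choi_pauli_channel K_def W_def)
  also have "\<dots> \<le> 2 * L * (ln (card K) / \<eta> + \<eta> * T)"
    unfolding W_def K_def
    using finite_pauli_idx pauli_idx_nonempty \<open>\<eta> > 0\<close> convex lipschitz
      valid pauli_overlap_bounds p
    by (intro convex_hedge_regret) (auto simp: prob_vec_def)
  also have "\<dots> \<le> 2 * L * (2 * real n / \<eta> + \<eta> * T)"
    using lipschitz[rule_format, of 1 "-1"] ln_card_pauli_idx[of n] \<open>\<eta> > 0\<close>
    by (auto simp: K_def intro!: mult_left_mono divide_right_mono)
  finally show ?thesis .
qed

lemma pauli_learner_regret_bound:
  assumes convex: "convex_on {-1..1} lf"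
    and lipschitz: "\<forall>x\<in>{-1..1}. \<forall>y\<in>{-1..1}. \<bar>lf x - lf y\<bar> \<le> L * \<bar>x - y\<bar>"
    and valid: "\<forall>t<T. channel_test n (E t) \<and> 0 \<le> b t \<and> b t \<le> 1"
    and p: "prob_vec n p"
  defines "\<eta> \<equiv> if n = 0 \<or> T = 0 then 1 else sqrt (n / T)"
  shows "(\<Sum>t<T. lf (pred (E t) (pauli_learner n L lf \<eta> (map (\<lambda>s. (E s, b s)) [0..<t])) - b t))
         - (\<Sum>t<T. lf (pred (E t) (choi (qdim n) (pauli_channel n p)) - b t))
         \<le> 6 * L * sqrt (real n * real T)"
proof -
  consider "T = 0" | "n = 0" | "0 < n" "0 < T"
    by blast
  then show ?thesis
  proof cases
    case 1
    then show ?thesis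
      by simp
  next
    case 2
    have "pauli_learner n L lf \<eta> h = choi (qdim n) (pauli_channel n p)" for h
      using 2 p pauli_learner_in_PAULI'[of n L lf \<eta> h] PAULI'_zero[of p] by simp
    then show ?thesis
      using 2 by simp
  next
    case 3
    then have "\<eta> = sqrt (n / T)" "\<eta> > 0"
      by (simp_all add: \<eta>_def)
    have "real n / \<eta> = sqrt (n * T)" "\<eta> * T = sqrt (n * T)"
      using 3 by (simp_all add: \<open>\<eta> = sqrt (n / T)\<close> real_sqrt_divide real_sqrt_mult field_simps real_div_sqrt)
    then have "2 * real n / \<eta> + \<eta> * T = 3 * sqrt (n * T)"
      by linarith
    then show ?thesis
      using pauli_learner_regret[OF \<open>\<eta> > 0\<close> convex lipschitz valid p] by simp
  qed
qed

theorem theorem3p5: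
  shows "\<exists>C::real. C > 0 \<and>
    (\<forall>(n::nat) (lf::real \<Rightarrow> real) (L::real).
      convex_on {-1..1} lf \<and>
      (\<forall>x\<in>{-1..1}. \<forall>y\<in>{-1..1}. \<bar>lf x - lf y\<bar> \<le> L * \<bar>x - y\<bar>) \<longrightarrow>
      (\<forall>T::nat. \<exists>strat :: (cmat \<times> real) list \<Rightarrow> cmat.
         (\<forall>h. strat h \<in> PAULI' n) \<and>
         (\<forall>(E::nat \<Rightarrow> cmat) (b::nat \<Rightarrow> real).
            (\<forall>t<T. channel_test n (E t) \<and> 0 \<le> b t \<and> b t \<le> 1) \<longrightarrow>
            (\<forall>p. prob_vec n p \<longrightarrow>
               (\<Sum>t<T. lf (pred (E t) (strat (map (\<lambda>s. (E s, b s)) [0..<t])) - b t))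
             - (\<Sum>t<T. lf (pred (E t) (choi (qdim n) (pauli_channel n p)) - b t))
             \<le> C * L * sqrt (real n * real T)))))"
  apply (intro exI[of _ "6 :: real"] conjI allI impI)
   apply simp
  subgoal for n lf L T
    by (intro exI[of _ "pauli_learner n L lf (if n = 0 \<or> T = 0 then 1 else sqrt (n / T))"]
        conjI allI impI pauli_learner_in_PAULI' pauli_learner_regret_bound) auto
  done

end
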